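(* Let $r,s\ge0$, $\Delta=(v(y_1),\dots,v(y_n))$, $F\subset\{1,\dots,n\}$ with $r+2s+|F|=|\Delta|-1$, and let $\mathcal{P}$ be a collection of conditions (points $P_1,\dots,P_{r+s}$ and lines $Q_j$, $j\in F$) in general position for $\mathrm{ev}_F$ on the closure of refined descendant curves and for the tropical descendant count below. Let $\alpha=(\alpha_1,\alpha_2,\dots)$ with $\alpha_i=\#\{j\in F: w(y_j)=i\}$, $I^\alpha=\prod_i i^{\alpha_i}$, $O_f=\{i\in F: w(y_i)\text{ odd}\}$, $O_n=\{i\notin F: w(y_i)\text{ odd}\}$. Then $$N^{desc}_{(r,s)}(1,\Delta,F,\mathcal{P})=\frac{\prod_{i\in O_f}w(y_i)}{\prod_{i\in O_n}w(y_i)}\;I^\alpha\;\widetilde N^{\mathrm{trop}}_{\Delta,(r,s,0,0,\dots)}(\alpha).$$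
   Context: Curves. An $(r,s)$-marked curve of degree $\Delta$ is $C=(\Gamma,h,x_1,\dots,x_{r+s})$ with $\Gamma$ a metric graph whose components are trees, $h:\Gamma\to\mathbb{R}^2$ continuous, affine with integral direction vectors on edges, balanced at vertices; $x_1,\dots,x_r$ (real) and $x_{r+1},\dots,x_{r+s}$ (complex) are contracted unbounded edges (markings), the other unbounded edges $y_1,\dots,y_n$ (labeled ends) have outward direction vectors $\Delta=(v(y_1),\dots,v(y_n))$. Weight $w(e)$ = gcd of coordinates of the direction vector. Mikhalkin multiplicity of a vertex with exactly three non-contracted edges of direction vectors $u,v,w$: $a=|\det(u,v)|$. $\mathcal{M}_{(r,s)}(\Delta)$ is the polyhedral complex of connected such curves. $\mathrm{ev}_F(C)=(h(x_1),\dots,h(x_{r+s}),(h(y_i))_{i\in F})\in(\mathbb{R}^2)^{r+s}\times\prod_{i\in F}\mathbb{R}^2/\langle v(y_i)\rangle$; general position means avoiding images of cells whose image has dimension $<2(r+s)+|F|$. $G(\Delta,F)$: permutations of $\{1,\dots,n\}$ fixing $F$ pointwise and preserving $v(y_i)$. Unoriented refined broccoli curve: vertices of types (I') 3-valent with real marking, $m_V(y)=1$; (II') 3-valent unmarked, $m_V(y)=\frac{y^{a/2}-y^{-a/2}}{y^{1/2}-y^{-1/2}}$; (III') 4-valent with complex marking, $m_V(y)=\frac{y^{a/2}+y^{-a/2}}{y^{1/2}+y^{-1/2}}$. End factors: $m_{y_i}(y)=\frac{y^{w(y_i)/2}+(-1)^{w(y_i)}y^{-w(y_i)/2}}{y^{1/2}+(-1)^{w(y_i)}y^{-1/2}}$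 for $i\in F$ and $m_{y_i}(y)=\frac{y^{w(y_i)/2}-(-1)^{w(y_i)}y^{-w(y_i)/2}}{w(y_i)(y^{1/2}-(-1)^{w(y_i)}y^{-1/2})}$ for $i\notin F$; $m_C(y)=\prod_i m_{y_i}(y)\prod_V m_V(y)$. Refined descendant curve: a curve in $\mathcal{M}_{(r,s)}(\Delta)$ whose real markings are each adjacent to a 3-valent vertex of $\Gamma$ and whose complex markings are each adjacent to a 4-valent vertex of $\Gamma$; for conditions in general position these coincide with the unoriented refined broccoli curves through them. $N^{desc}_{(r,s)}(y,\Delta,F,\mathcal{P})=\frac{1}{|G(\Delta,F)|}\sum_C m_C(y)$ over refined descendant curves $C$ with $\mathrm{ev}_F(C)=\mathcal P$. Tropical descendant invariant: with $m=r+s$ markings and $\mathbf{k}=(r,s,0,\dots)$, $\widetilde N^{\mathrm{trop}}_{\Delta,\mathbf{k}}(\alpha)=\frac{1}{I^\alpha}\frac{1}{|G(\Delta,F)|}\sum_C m^{desc}_C$, where the sum runs over connected rational $m$-marked tropical curves $C$ of degree $\Delta$ (all ends labeled) with $h(x_i)=P_i$, with $x_1,\dots,x_r$ adjacent to 3-valent vertices and $x_{r+1},\dots,x_{r+s}$ adjacent to 4-valent vertices of $\Gamma$, with $h(y_j)\in Q_j$ for $j\in F$, and all vertices not adjacent to a marking 3-valent; and $m^{desc}_C$ is the product of the Mikhalkin multiplicities of the 3-valent vertices not adjacent to a marking. *)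

theory Defs
  imports "HOL-Analysis.Analysis" "HOL-Combinatorics.Permutations"
begin

text \<open>Labels of the unbounded edges: X i (i < r+s) are the markings (contracted ends)
x_{i+1}, where X 0 .. X (r-1) are real and X r .. X (r+s-1) are complex markings;
Y j (j < n) are the labelled non-contracted ends y_{j+1}.  A degree is a map
Delta :: nat => int * int, Delta j = v(y_{j+1}).  Indices are 0-based.\<close>

datatype lab = X nat | Y nat

definition labs :: "nat \<Rightarrow> nat \<Rightarrow> lab set" where
  "labs m n = X ` {..<m} \<union> Y ` {..<n}"

text \<open>A curve: finite vertex set, bounded edges (2-element vertex sets), edge lengths,
attachment vertex of every unbounded edge, and the image h(V) of every vertex.
h is affine on edges, so it is determined by these data.\<close>

record curve =
  verts :: "nat set"
  edges :: "nat set set"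
  len :: "nat set \<Rightarrow> real"
  att :: "lab \<Rightarrow> nat"
  pos :: "nat \<Rightarrow> real \<times> real"

definition rvec :: "int \<times> int \<Rightarrow> real \<times> real" where
  "rvec v = (real_of_int (fst v), real_of_int (snd v))"

definition det2 :: "real \<times> real \<Rightarrow> real \<times> real \<Rightarrow> real" where
  "det2 u v = fst u * snd v - snd u * fst v"

definition integral_vec :: "real \<times> real \<Rightarrow> bool" where
  "integral_vec v \<longleftrightarrow> fst v \<in> \<int> \<and> snd v \<in> \<int>"

definition other :: "nat \<Rightarrow> nat set \<Rightarrow> nat" where
  "other u e = (THE v. v \<in> e \<and> v \<noteq> u)"

definition dir :: "curve \<Rightarrow> nat \<Rightarrow> nat set \<Rightarrow> real \<times> real" where
  "dir C u e = (1 / len C e) *\<^sub>R (pos C (other u e) - pos C u)"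

definition edges_at :: "curve \<Rightarrow> nat \<Rightarrow> nat set set" where
  "edges_at C u = {e \<in> edges C. u \<in> e}"

definition valence :: "nat \<Rightarrow> nat \<Rightarrow> curve \<Rightarrow> nat \<Rightarrow> nat" where
  "valence m n C u = card (edges_at C u) + card {l \<in> labs m n. att C l = u}"

definition adj :: "curve \<Rightarrow> (nat \<times> nat) set" where
  "adj C = {(u, v). {u, v} \<in> edges C}"

definition is_tree :: "curve \<Rightarrow> bool" where
  "is_tree C \<longleftrightarrow> finite (verts C) \<and> verts C \<noteq> {} \<and>
     (\<forall>e \<in> edges C. e \<subseteq> verts C \<and> card e = 2) \<and>
     (\<forall>u \<in> verts C. \<forall>v \<in> verts C. (u, v) \<in> (adj C)\<^sup>*) \<and>
     card (edges C) + 1 = card (verts C)"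

text \<open>C is a connected rational (m-marked, m = r+s) plane tropical curve of degree Delta
(with n ends): an element of M_{(r,s)}(Delta).  Abstract curves have no vertices
of valence \<le> 2.\<close>

definition is_curve :: "nat \<Rightarrow> nat \<Rightarrow> (nat \<Rightarrow> int \<times> int) \<Rightarrow> curve \<Rightarrow> bool" where
  "is_curve m n Delta C \<longleftrightarrow>
     is_tree C \<and>
     (\<forall>l \<in> labs m n. att C l \<in> verts C) \<and>
     (\<forall>e \<in> edges C. len C e > 0) \<and>
     (\<forall>e \<in> edges C. \<forall>u \<in> e. integral_vec (dir C u e)) \<and>
     (\<forall>u \<in> verts C.
        (\<Sum>e \<in> edges_at C u. dir C u e) +
        (\<Sum>j \<in> {j. j < n \<and> att C (Y j) = u}. rvec (Delta j)) = 0) \<and>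
     (\<forall>u \<in> verts C. valence m n C u \<ge> 3)"

definition iso :: "nat \<Rightarrow> nat \<Rightarrow> curve \<Rightarrow> curve \<Rightarrow> bool" where
  "iso m n C D \<longleftrightarrow> (\<exists>\<phi>. bij_betw \<phi> (verts C) (verts D) \<and>
     bij_betw (\<lambda>e. \<phi> ` e) (edges C) (edges D) \<and>
     (\<forall>e \<in> edges C. len D (\<phi> ` e) = len C e) \<and>
     (\<forall>l \<in> labs m n. att D l = \<phi> (att C l)) \<and>
     (\<forall>u \<in> verts C. pos D (\<phi> u) = pos C u))"

text \<open>Same combinatorial type (same cell of the moduli space)\<close>

definition same_type :: "nat \<Rightarrow> nat \<Rightarrow> curve \<Rightarrow> curve \<Rightarrow> bool" where
  "same_type m n C D \<longleftrightarrow> (\<exists>\<phi>. bij_betw \<phi> (verts C) (verts D) \<and>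
     bij_betw (\<lambda>e. \<phi> ` e) (edges C) (edges D) \<and>
     (\<forall>l \<in> labs m n. att D l = \<phi> (att C l)))"

text \<open>The combinatorial type of D is a face of (a degeneration of) that of C:
D arises from C by contracting some bounded edges.\<close>

definition degenerates :: "nat \<Rightarrow> nat \<Rightarrow> curve \<Rightarrow> curve \<Rightarrow> bool" where
  "degenerates m n C D \<longleftrightarrow> (\<exists>\<psi>. \<psi> ` verts C = verts D \<and>
     (\<forall>l \<in> labs m n. att D l = \<psi> (att C l)) \<and>
     (\<forall>e \<in> edges C. card (\<psi> ` e) = 1 \<or> \<psi> ` e \<in> edges D) \<and>
     (\<forall>e' \<in> edges D. \<exists>!e. e \<in> edges C \<and> \<psi> ` e = e'))"

definition sum_classes :: "nat \<Rightarrow> nat \<Rightarrow> curve set \<Rightarrow> (curve \<Rightarrow> real) \<Rightarrow> real" where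
  "sum_classes m n S f =
     (\<Sum>K \<in> S // {(C, D). C \<in> S \<and> D \<in> S \<and> iso m n C D}. f (SOME C. C \<in> K))"

text \<open>P i (i < r+s) are the points; for j in F the condition for the end Y j is the
point of R^2/<v(y_j)> represented by q j, i.e. the line q j + R v(y_j).\<close>

definition through :: "nat \<Rightarrow> nat \<Rightarrow> (nat \<Rightarrow> int \<times> int) \<Rightarrow> nat set \<Rightarrow>
    (nat \<Rightarrow> real \<times> real) \<Rightarrow> (nat \<Rightarrow> real \<times> real) \<Rightarrow> curve \<Rightarrow> bool" where
  "through m n Delta F P q C \<longleftrightarrow>
     (\<forall>i < m. pos C (att C (X i)) = P i) \<and>
     (\<forall>j \<in> F. \<exists>t::real. pos C (att C (Y j)) = q j + t *\<^sub>R rvec (Delta j))"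

text \<open>ev_F in coordinates: R^{2m} x prod_{j in F} R, where R^2/<v> is identified with R
via the linear isomorphism [p] |-> det(v, p).\<close>

definition evF :: "nat \<Rightarrow> (nat \<Rightarrow> int \<times> int) \<Rightarrow> nat set \<Rightarrow> curve \<Rightarrow> nat \<Rightarrow> real" where
  "evF m Delta F C k =
     (if k < 2 * m then
        (if even k then fst (pos C (att C (X (k div 2)))) else snd (pos C (att C (X (k div 2)))))
      else if k - 2 * m \<in> F then det2 (rvec (Delta (k - 2 * m))) (pos C (att C (Y (k - 2 * m))))
      else 0)"

definition cond_vec :: "nat \<Rightarrow> (nat \<Rightarrow> int \<times> int) \<Rightarrow> nat set \<Rightarrow>
    (nat \<Rightarrow> real \<times> real) \<Rightarrow> (nat \<Rightarrow> real \<times> real) \<Rightarrow> nat \<Rightarrow> real" where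
  "cond_vec m Delta F P q k =
     (if k < 2 * m then
        (if even k then fst (P (k div 2)) else snd (P (k div 2)))
      else if k - 2 * m \<in> F then det2 (rvec (Delta (k - 2 * m))) (q (k - 2 * m))
      else 0)"

definition aff_dim_ge :: "(nat \<Rightarrow> real) set \<Rightarrow> nat \<Rightarrow> bool" where
  "aff_dim_ge S k \<longleftrightarrow> (\<exists>x :: nat \<Rightarrow> nat \<Rightarrow> real. (\<forall>i \<le> k. x i \<in> S) \<and>
     (\<forall>c :: nat \<Rightarrow> real. (\<forall>t. (\<Sum>i \<in> {1..k}. c i * (x i t - x 0 t)) = 0) \<longrightarrow>
        (\<forall>i \<in> {1..k}. c i = 0)))"

definition marked_vertices :: "nat \<Rightarrow> curve \<Rightarrow> nat set" where
  "marked_vertices m C = (\<lambda>i. att C (X i)) ` {..<m}"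

definition refined_desc :: "nat \<Rightarrow> nat \<Rightarrow> nat \<Rightarrow> (nat \<Rightarrow> int \<times> int) \<Rightarrow> curve \<Rightarrow> bool" where
  "refined_desc r s n Delta C \<longleftrightarrow> is_curve (r + s) n Delta C \<and>
     (\<forall>i < r. valence (r + s) n C (att C (X i)) = 3) \<and>
     (\<forall>i. r \<le> i \<and> i < r + s \<longrightarrow> valence (r + s) n C (att C (X i)) = 4)"

definition trop_desc :: "nat \<Rightarrow> nat \<Rightarrow> nat \<Rightarrow> (nat \<Rightarrow> int \<times> int) \<Rightarrow> curve \<Rightarrow> bool" where
  "trop_desc r s n Delta C \<longleftrightarrow> refined_desc r s n Delta C \<and>
     (\<forall>u \<in> verts C - marked_vertices (r + s) C. valence (r + s) n C u = 3)"

text \<open>General position of the conditions for ev_F on the closure of the set of refined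
descendant curves: the closure is the union of the cells that are faces of cells of
refined descendant curves; P must avoid the ev_F-images of those cells whose image has
dimension < 2(r+s)+|F|.\<close>

definition general_position :: "nat \<Rightarrow> nat \<Rightarrow> nat \<Rightarrow> (nat \<Rightarrow> int \<times> int) \<Rightarrow> nat set \<Rightarrow>
    (nat \<Rightarrow> real \<times> real) \<Rightarrow> (nat \<Rightarrow> real \<times> real) \<Rightarrow> bool" where
  "general_position r s n Delta F P q \<longleftrightarrow>
     (\<forall>C. is_curve (r + s) n Delta C \<and>
          (\<exists>D. refined_desc r s n Delta D \<and> degenerates (r + s) n D C) \<and>
          \<not> aff_dim_ge (evF (r + s) Delta F `
                {D. is_curve (r + s) n Delta D \<and> same_type (r + s) n C D})
             (2 * (r + s) + card F)
        \<longrightarrow> evF (r + s) Delta F C \<noteq> cond_vec (r + s) Delta F P q)"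

definition weight :: "(nat \<Rightarrow> int \<times> int) \<Rightarrow> nat \<Rightarrow> nat" where
  "weight Delta j = nat (gcd (fst (Delta j)) (snd (Delta j)))"

definition flags :: "nat \<Rightarrow> (nat \<Rightarrow> int \<times> int) \<Rightarrow> curve \<Rightarrow> nat \<Rightarrow> (nat set + nat) set" where
  "flags n Delta C u = Inl ` {e \<in> edges_at C u. dir C u e \<noteq> 0} \<union>
                       Inr ` {j. j < n \<and> att C (Y j) = u}"

definition flag_dir :: "(nat \<Rightarrow> int \<times> int) \<Rightarrow> curve \<Rightarrow> nat \<Rightarrow> nat set + nat \<Rightarrow> real \<times> real" where
  "flag_dir Delta C u f = (case f of Inl e \<Rightarrow> dir C u e | Inr j \<Rightarrow> rvec (Delta j))"

text \<open>Mikhalkin multiplicity |det(u,v)| of a vertex with exactly three non-contracted edges\<close>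

definition mikh :: "nat \<Rightarrow> (nat \<Rightarrow> int \<times> int) \<Rightarrow> curve \<Rightarrow> nat \<Rightarrow> real" where
  "mikh n Delta C u = (THE a. \<exists>f g. f \<in> flags n Delta C u \<and> g \<in> flags n Delta C u \<and> f \<noteq> g \<and>
                         a = \<bar>det2 (flag_dir Delta C u f) (flag_dir Delta C u g)\<bar>)"

text \<open>Refined vertex multiplicities as functions of y > 0 (y^(1/2) = y powr (1/2))\<close>

definition qnum :: "real \<Rightarrow> real \<Rightarrow> real" where
  "qnum a y = (y powr (a/2) - y powr (-a/2)) / (y powr (1/2) - y powr (-1/2))"

definition qnum_plus :: "real \<Rightarrow> real \<Rightarrow> real" where
  "qnum_plus a y = (y powr (a/2) + y powr (-a/2)) / (y powr (1/2) + y powr (-1/2))"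

definition vert_mult :: "nat \<Rightarrow> nat \<Rightarrow> nat \<Rightarrow> (nat \<Rightarrow> int \<times> int) \<Rightarrow> curve \<Rightarrow> nat \<Rightarrow> real \<Rightarrow> real" where
  "vert_mult r s n Delta C u y =
     (if \<exists>i < r. att C (X i) = u then 1
      else if \<exists>i. r \<le> i \<and> i < r + s \<and> att C (X i) = u then qnum_plus (mikh n Delta C u) y
      else qnum (mikh n Delta C u) y)"

definition end_mult :: "(nat \<Rightarrow> int \<times> int) \<Rightarrow> nat set \<Rightarrow> nat \<Rightarrow> real \<Rightarrow> real" where
  "end_mult Delta F j y =
     (let w = real (weight Delta j); sg = (-1::real) ^ weight Delta j in
      if j \<in> F then (y powr (w/2) + sg * y powr (-w/2)) / (y powr (1/2) + sg * y powr (-1/2))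
      else (y powr (w/2) - sg * y powr (-w/2)) / (w * (y powr (1/2) - sg * y powr (-1/2))))"

definition curve_mult :: "nat \<Rightarrow> nat \<Rightarrow> nat \<Rightarrow> (nat \<Rightarrow> int \<times> int) \<Rightarrow> nat set \<Rightarrow> curve \<Rightarrow> real \<Rightarrow> real" where
  "curve_mult r s n Delta F C y =
     (\<Prod>j < n. end_mult Delta F j y) * (\<Prod>u \<in> verts C. vert_mult r s n Delta C u y)"

definition Gcard :: "nat \<Rightarrow> (nat \<Rightarrow> int \<times> int) \<Rightarrow> nat set \<Rightarrow> nat" where
  "Gcard n Delta F = card {\<sigma>. \<sigma> permutes {..<n} \<and> (\<forall>i \<in> F. \<sigma> i = i) \<and>
                             (\<forall>i < n. Delta (\<sigma> i) = Delta i)}"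

definition Ndesc :: "nat \<Rightarrow> nat \<Rightarrow> nat \<Rightarrow> (nat \<Rightarrow> int \<times> int) \<Rightarrow> nat set \<Rightarrow>
    (nat \<Rightarrow> real \<times> real) \<Rightarrow> (nat \<Rightarrow> real \<times> real) \<Rightarrow> real \<Rightarrow> real" where
  "Ndesc r s n Delta F P q y =
     1 / real (Gcard n Delta F) *
     sum_classes (r + s) n
       {C. refined_desc r s n Delta C \<and> through (r + s) n Delta F P q C}
       (\<lambda>C. curve_mult r s n Delta F C y)"

text \<open>N^desc(1,...): value at y = 1 of the Laurent polynomial, i.e. the limit y -> 1\<close>

definition Ndesc_at1 :: "nat \<Rightarrow> nat \<Rightarrow> nat \<Rightarrow> (nat \<Rightarrow> int \<times> int) \<Rightarrow> nat set \<Rightarrow>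
    (nat \<Rightarrow> real \<times> real) \<Rightarrow> (nat \<Rightarrow> real \<times> real) \<Rightarrow> real" where
  "Ndesc_at1 r s n Delta F P q = Lim (at (1::real)) (Ndesc r s n Delta F P q)"

definition alpha :: "(nat \<Rightarrow> int \<times> int) \<Rightarrow> nat set \<Rightarrow> nat \<Rightarrow> nat" where
  "alpha Delta F i = card {j \<in> F. weight Delta j = i}"

definition Ipow :: "(nat \<Rightarrow> nat) \<Rightarrow> real" where
  "Ipow \<alpha> = (\<Prod>i \<in> {i. \<alpha> i \<noteq> 0}. real i ^ \<alpha> i)"

definition desc_mult :: "nat \<Rightarrow> nat \<Rightarrow> (nat \<Rightarrow> int \<times> int) \<Rightarrow> curve \<Rightarrow> real" where
  "desc_mult m n Delta C = (\<Prod>u \<in> verts C - marked_vertices m C. mikh n Delta C u)"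

definition Ntrop :: "nat \<Rightarrow> nat \<Rightarrow> nat \<Rightarrow> (nat \<Rightarrow> int \<times> int) \<Rightarrow> nat set \<Rightarrow>
    (nat \<Rightarrow> real \<times> real) \<Rightarrow> (nat \<Rightarrow> real \<times> real) \<Rightarrow> (nat \<Rightarrow> nat) \<Rightarrow> real" where
  "Ntrop r s n Delta F P q \<alpha> =
     1 / Ipow \<alpha> * (1 / real (Gcard n Delta F)) *
     sum_classes (r + s) n
       {C. trop_desc r s n Delta C \<and> through (r + s) n Delta F P q C}
       (\<lambda>C. desc_mult (r + s) n Delta C)"

end

theory Submission
  imports Defs "HOL-Library.Function_Algebras"
begin

text \<open>At \<open>y = 1\<close> every refined factor tends to its classical value: an unmarked vertex
to its Mikhalkin multiplicity, a marked one to 1, and an end of odd weight \<open>w\<close> to \<open>w\<close>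
if its position is constrained and to \<open>1/w\<close> otherwise.  It remains to see that general position
forces every refined descendant curve through the conditions to be a tropical descendant curve.
If it were not, either two markings would share a vertex, or some unmarked vertex would have
valence at least four, and then counting valences leaves fewer than \<open>2(r+s)+|F|-2\<close> bounded edges.
In both cases \<open>ev_F\<close> maps the cell of the curve into an affine space of dimension less than
\<open>2(r+s)+|F|\<close>: within a combinatorial type, balancing on a tree fixes all edge directions, so
vertex positions are affine in the position of one vertex and the edge lengths.\<close>

section \<open>Limits at \<open>y = 1\<close>\<close>

lemma tendsto_divide_of_derivatives:
  fixes f g :: "real \<Rightarrow> real"
  assumes "(f has_real_derivative a) (at x)" "(g has_real_derivative b) (at x)"
    and "f x = 0" "g x = 0" "b \<noteq> 0"
  shows "((\<lambda>y. f y / g y) \<longlongrightarrow> a / b) (at x)"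
proof -
  have "((\<lambda>y. ((f y - f x) / (y - x)) / ((g y - g x) / (y - x))) \<longlongrightarrow> a / b) (at x)"
    using assms(1,2,5) by (intro tendsto_divide) (auto simp: has_field_derivative_iff)
  moreover have "\<forall>\<^sub>F y in at x. ((f y - f x) / (y - x)) / ((g y - g x) / (y - x)) = f y / g y"
    by (auto simp: eventually_at_filter assms(3,4))
  ultimately show ?thesis by (rule Lim_transform_eventually)
qed

lemma qnum_tendsto: "(qnum a \<longlongrightarrow> a) (at 1)"
proof -
  have "((\<lambda>y. y powr (a/2) - y powr (-a/2)) has_real_derivative a) (at 1)"
    and "((\<lambda>y. y powr (1/2) - y powr (-1/2)) has_real_derivative 1) (at 1)"
    by (auto intro!: derivative_eq_intros)
  from tendsto_divide_of_derivatives[OF this] show ?thesis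
    by (simp add: qnum_def[abs_def])
qed

lemma qnum_plus_tendsto: "(qnum_plus a \<longlongrightarrow> 1) (at 1)"
proof -
  have "(qnum_plus a \<longlongrightarrow> qnum_plus a 1) (at 1)"
    unfolding qnum_plus_def[abs_def] by (intro tendsto_intros) auto
  then show ?thesis by (simp add: qnum_plus_def)
qed

definition end_limit :: "(nat \<Rightarrow> int \<times> int) \<Rightarrow> nat set \<Rightarrow> nat \<Rightarrow> real" where
  "end_limit Delta F j =
     (if odd (weight Delta j) then (if j \<in> F then real (weight Delta j) else 1 / real (weight Delta j))
      else 1)"

lemma end_mult_tendsto:
  assumes "weight Delta j > 0"
  shows "(end_mult Delta F j \<longlongrightarrow> end_limit Delta F j) (at 1)"
proof -
  define w where "w = real (weight Delta j)"
  have "w > 0" using assms by (simp add: w_def)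
  consider "odd (weight Delta j)" "j \<in> F" | "odd (weight Delta j)" "j \<notin> F"
    | "even (weight Delta j)" "j \<in> F" | "even (weight Delta j)" "j \<notin> F" by blast
  then show ?thesis
  proof cases
    case 1
    then have "end_mult Delta F j = qnum w"
      by (auto simp: fun_eq_iff end_mult_def Let_def qnum_def w_def)
    then show ?thesis using 1 qnum_tendsto[of w] by (simp add: end_limit_def w_def)
  next
    case 2
    then have "end_mult Delta F j =
        (\<lambda>y. (y powr (w/2) + y powr (-w/2)) / (w * (y powr (1/2) + y powr (-1/2))))"
      by (auto simp: fun_eq_iff end_mult_def Let_def w_def)
    moreover have "((\<lambda>y. (y powr (w/2) + y powr (-w/2)) / (w * (y powr (1/2) + y powr (-1/2))))
        \<longlongrightarrow> (1 powr (w/2) + 1 powr (-w/2)) / (w * (1 powr (1/2) + 1 powr (-1/2)))) (at 1)"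
      using \<open>w > 0\<close> by (intro tendsto_intros) auto
    ultimately show ?thesis using 2 \<open>w > 0\<close> by (simp add: end_limit_def w_def)
  next
    case 3
    then have "end_mult Delta F j = qnum_plus w"
      by (auto simp: fun_eq_iff end_mult_def Let_def qnum_plus_def w_def)
    then show ?thesis using 3 qnum_plus_tendsto[of w] by (simp add: end_limit_def)
  next
    case 4
    then have "end_mult Delta F j = (\<lambda>y. qnum w y / w)"
      by (auto simp: fun_eq_iff end_mult_def Let_def qnum_def w_def)
    moreover have "((\<lambda>y. qnum w y / w) \<longlongrightarrow> w / w) (at 1)"
      using \<open>w > 0\<close> by (intro tendsto_intros qnum_tendsto) auto
    ultimately show ?thesis using 4 \<open>w > 0\<close> by (simp add: end_limit_def)
  qed
qed

lemma weight_pos: "Delta j \<noteq> (0, 0) \<Longrightarrow> weight Delta j > 0"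
  unfolding weight_def by (cases "Delta j") auto

lemma prod_end_limit:
  assumes "F \<subseteq> {..<n}"
  shows "(\<Prod>j<n. end_limit Delta F j) =
    (\<Prod>i \<in> {i \<in> F. odd (weight Delta i)}. real (weight Delta i)) /
    (\<Prod>i \<in> {i. i < n \<and> i \<notin> F \<and> odd (weight Delta i)}. real (weight Delta i))"
proof -
  let ?A = "{i \<in> F. odd (weight Delta i)}" and ?B = "{i. i < n \<and> i \<notin> F \<and> odd (weight Delta i)}"
  have "finite F" using assms finite_subset by blast
  then have fin: "finite ?A" "finite ?B" by auto
  have "(\<Prod>j<n. end_limit Delta F j) = (\<Prod>j \<in> ?A \<union> ?B. end_limit Delta F j)"
    by (rule prod.mono_neutral_right) (use assms in \<open>auto simp: end_limit_def\<close>)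
  also have "\<dots> = (\<Prod>j \<in> ?A. end_limit Delta F j) * (\<Prod>j \<in> ?B. end_limit Delta F j)"
    by (rule prod.union_disjoint) (use fin in auto)
  also have "\<dots> = (\<Prod>i \<in> ?A. real (weight Delta i)) * (\<Prod>i \<in> ?B. 1 / real (weight Delta i))"
    by (intro arg_cong2[where f = "(*)"] prod.cong) (auto simp: end_limit_def)
  finally show ?thesis by (simp add: prod_dividef)
qed

lemma vert_mult_tendsto:
  "(vert_mult r s n Delta C u \<longlongrightarrow>
     (if u \<in> marked_vertices (r + s) C then 1 else mikh n Delta C u)) (at 1)"
proof (cases "u \<in> marked_vertices (r + s) C")
  case True
  then obtain i where i: "i < r + s" "att C (X i) = u" by (auto simp: marked_vertices_def)
  show ?thesis
  proof (cases "\<exists>i < r. att C (X i) = u")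
    case True
    then have "vert_mult r s n Delta C u = (\<lambda>_. 1)" by (simp add: fun_eq_iff vert_mult_def)
    then show ?thesis using \<open>u \<in> marked_vertices (r + s) C\<close> by simp
  next
    case False
    with i have "r \<le> i" using not_less by blast
    with i False have "vert_mult r s n Delta C u = qnum_plus (mikh n Delta C u)"
      unfolding vert_mult_def by (intro ext) (metis (no_types, lifting))
    then show ?thesis using \<open>u \<in> marked_vertices (r + s) C\<close> qnum_plus_tendsto by simp
  qed
next
  case False
  then have "vert_mult r s n Delta C u = qnum (mikh n Delta C u)"
    by (auto simp: fun_eq_iff vert_mult_def marked_vertices_def)
  then show ?thesis using False qnum_tendsto by simp
qed

lemma curve_mult_tendsto:
  assumes "\<forall>j < n. Delta j \<noteq> (0, 0)" and "finite (verts C)"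
  shows "(curve_mult r s n Delta F C \<longlongrightarrow>
     (\<Prod>j<n. end_limit Delta F j) * desc_mult (r + s) n Delta C) (at 1)"
proof -
  let ?M = "marked_vertices (r + s) C"
  have "(\<Prod>u \<in> verts C. if u \<in> ?M then 1 else mikh n Delta C u)
      = (\<Prod>u \<in> verts C - ?M. if u \<in> ?M then 1 else mikh n Delta C u)"
    by (rule prod.mono_neutral_right) (use assms(2) in auto)
  also have "\<dots> = desc_mult (r + s) n Delta C"
    unfolding desc_mult_def by (rule prod.cong) auto
  finally have "(\<Prod>u \<in> verts C. if u \<in> ?M then 1 else mikh n Delta C u) = desc_mult (r + s) n Delta C" .
  moreover have "(curve_mult r s n Delta F C \<longlongrightarrow> (\<Prod>j<n. end_limit Delta F j) *
      (\<Prod>u \<in> verts C. if u \<in> ?M then 1 else mikh n Delta C u)) (at 1)"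
    unfolding curve_mult_def[abs_def]
    using assms(1) by (intro tendsto_mult tendsto_prod end_mult_tendsto vert_mult_tendsto weight_pos) auto
  ultimately show ?thesis by simp
qed

lemma Ipow_alpha_pos:
  assumes "\<forall>j < n. Delta j \<noteq> (0, 0)" and "F \<subseteq> {..<n}"
  shows "Ipow (alpha Delta F) > 0"
  unfolding Ipow_def
proof (rule prod_pos)
  fix i assume "i \<in> {i. alpha Delta F i \<noteq> 0}"
  then obtain j where "j \<in> F" "weight Delta j = i"
    unfolding alpha_def by (metis (mono_tags, lifting) Collect_empty_eq card.empty mem_Collect_eq)
  then have "i > 0" using assms weight_pos by blast
  then show "real i ^ alpha Delta F i > 0" by simp
qed

section \<open>Flows on trees\<close>

lemma finite_edges: "is_tree G \<Longrightarrow> finite (edges G)"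
  by (rule finite_subset[of _ "Pow (verts G)"]) (auto simp: is_tree_def)

lemma sum_card_edges_at:
  assumes "is_tree G"
  shows "(\<Sum>u \<in> verts G. card (edges_at G u)) = 2 * card (edges G)"
  unfolding edges_at_def
proof (rule sum_multicount)
  show "finite (verts G)" "finite (edges G)"
    using assms finite_edges by (auto simp: is_tree_def)
  show "\<forall>e \<in> edges G. card {u \<in> verts G. u \<in> e} = 2"
  proof
    fix e assume "e \<in> edges G"
    then have "e \<subseteq> verts G" "card e = 2" using assms by (auto simp: is_tree_def)
    then show "card {u \<in> verts G. u \<in> e} = 2" by (simp add: Int_absorb1 Collect_conj_eq)
  qed
qed

lemma tree_edge_other_end:
  assumes "is_tree G" "e \<in> edges G" "u \<in> e"
  obtains w where "e = {u, w}" "w \<noteq> u" "w \<in> verts G"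
proof -
  have "e \<subseteq> verts G" "card e = 2" using assms(1,2) by (auto simp: is_tree_def)
  then obtain a b where ab: "e = {a, b}" "a \<noteq> b" by (meson card_2_iff)
  show thesis
  proof (cases "a = u")
    case True
    then show thesis using that[of b] ab \<open>e \<subseteq> verts G\<close> by auto
  next
    case False
    then have "b = u" using assms(3) ab(1) by auto
    then show thesis using that[of a] ab \<open>e \<subseteq> verts G\<close> by (auto simp: insert_commute)
  qed
qed

lemma tree_has_leaf:
  assumes tree: "is_tree G" and "edges G \<noteq> {}"
  obtains u e where "u \<in> verts G" "edges_at G u = {e}"
proof -
  have fV: "finite (verts G)" and cnt: "card (edges G) + 1 = card (verts G)"
    and eV: "\<forall>e \<in> edges G. e \<subseteq> verts G \<and> card e = 2"
    and conn: "\<forall>u \<in> verts G. \<forall>v \<in> verts G. (u, v) \<in> (adj G)\<^sup>*"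
    using tree by (auto simp: is_tree_def)
  have "\<exists>u \<in> verts G. card (edges_at G u) < 2"
  proof (rule ccontr)
    assume "\<not> ?thesis"
    then have "(\<Sum>u \<in> verts G. 2) \<le> (\<Sum>u \<in> verts G. card (edges_at G u))"
      by (intro sum_mono) auto
    then show False using sum_card_edges_at[OF tree] cnt by simp
  qed
  then obtain u where u: "u \<in> verts G" "card (edges_at G u) < 2" by blast
  obtain e where "e \<in> edges G" using \<open>edges G \<noteq> {}\<close> by blast
  then obtain a b where ab: "e = {a, b}" "a \<noteq> b" using eV by (meson card_2_iff)
  have "a \<in> verts G" "b \<in> verts G" using eV \<open>e \<in> edges G\<close> ab(1) by auto
  then obtain w where "w \<in> verts G" "w \<noteq> u" using ab(2) by metis
  then have "(u, w) \<in> (adj G)\<^sup>*" using conn u(1) by blast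
  then obtain z where "(u, z) \<in> adj G" using \<open>w \<noteq> u\<close> by (blast elim: converse_rtranclE)
  then have "{u, z} \<in> edges_at G u" by (simp add: adj_def edges_at_def)
  moreover have "finite (edges_at G u)" using finite_edges[OF tree] by (simp add: edges_at_def)
  ultimately have "card (edges_at G u) \<noteq> 0" by (metis card_0_eq empty_iff)
  then have "card (edges_at G u) = 1" using u(2) by linarith
  then show thesis using that u(1) by (meson card_1_singletonE)
qed

lemma adj_rtrancl_remove_leaf:
  assumes eV: "\<forall>e \<in> edges G. card e = 2" and leaf: "edges_at G u = {{u, w}}"
    and path: "(x, z) \<in> (adj G)\<^sup>*" and "x \<noteq> u"
  shows "(x, if z = u then w else z) \<in> {(a, b). {a, b} \<in> edges G - {{u, w}}}\<^sup>*"
  using path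
proof (induction rule: rtrancl_induct)
  case base
  then show ?case using \<open>x \<noteq> u\<close> by simp
next
  case (step y z)
  then have yz: "{y, z} \<in> edges G" by (simp add: adj_def)
  then have "y \<noteq> z" using eV by fastforce
  have leaf_edge: "e = {u, w}" if "e \<in> edges G" "u \<in> e" for e
    using leaf that by (auto simp: edges_at_def)
  consider "y = u" | "z = u" | "y \<noteq> u" "z \<noteq> u" by blast
  then show ?case
  proof cases
    case 1
    then have "z = w" using leaf_edge[OF yz] \<open>y \<noteq> z\<close> by (auto simp: doubleton_eq_iff)
    then show ?thesis using step.IH 1 \<open>y \<noteq> z\<close> by simp
  next
    case 2
    then have "y = w" using leaf_edge yz \<open>y \<noteq> z\<close> by (auto simp: doubleton_eq_iff)
    then show ?thesis using step.IH 2 \<open>y \<noteq> z\<close> by simp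
  next
    case 3
    then have "{y, z} \<noteq> {u, w}" by auto
    with 3 yz step.IH show ?thesis by (auto intro: rtrancl_into_rtrancl)
  qed
qed

lemma is_tree_remove_leaf:
  assumes tree: "is_tree G" and u: "u \<in> verts G" and leaf: "edges_at G u = {e}"
  shows "is_tree (G\<lparr>verts := verts G - {u}, edges := edges G - {e}\<rparr>)"
proof -
  have fV: "finite (verts G)" and cnt: "card (edges G) + 1 = card (verts G)"
    and eV: "\<forall>e \<in> edges G. e \<subseteq> verts G \<and> card e = 2"
    and conn: "\<forall>u \<in> verts G. \<forall>v \<in> verts G. (u, v) \<in> (adj G)\<^sup>*"
    using tree by (auto simp: is_tree_def)
  have e: "e \<in> edges G" "u \<in> e" using leaf by (auto simp: edges_at_def)
  then obtain w where w: "e = {u, w}" "w \<noteq> u" "w \<in> verts G"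
    by (rule tree_edge_other_end[OF tree])
  have only_e: "e' = e" if "e' \<in> edges G" "u \<in> e'" for e'
    using leaf that by (auto simp: edges_at_def)
  let ?G = "G\<lparr>verts := verts G - {u}, edges := edges G - {e}\<rparr>"
  have "(x, y) \<in> (adj ?G)\<^sup>*" if "x \<in> verts ?G" "y \<in> verts ?G" for x y
  proof -
    have "(x, y) \<in> (adj G)\<^sup>*" "x \<noteq> u" "y \<noteq> u" using that conn by auto
    moreover have "\<forall>e \<in> edges G. card e = 2" using eV by blast
    ultimately show ?thesis
      using adj_rtrancl_remove_leaf[of G u w x y] leaf w(1) by (simp add: adj_def)
  qed
  moreover have "e' \<subseteq> verts ?G \<and> card e' = 2" if "e' \<in> edges ?G" for e'
    using that eV only_e by auto
  moreover have "card (edges ?G) + 1 = card (verts ?G)"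
  proof -
    have "card (edges ?G) = card (edges G) - 1" "card (verts ?G) = card (verts G) - 1"
      using e(1) u by simp_all
    moreover have "card (edges G) \<ge> 1"
      using e(1) finite_edges[OF tree] by (auto simp: Suc_le_eq card_gt_0_iff)
    ultimately show ?thesis using cnt by simp
  qed
  moreover have "finite (verts ?G)" "verts ?G \<noteq> {}" using fV w(2,3) by auto
  ultimately show ?thesis unfolding is_tree_def by blast
qed

lemma tree_flow_vanishes:
  fixes \<delta> :: "nat \<Rightarrow> nat set \<Rightarrow> 'a::ab_group_add"
  assumes "is_tree G"
    and "\<forall>e \<in> edges G. \<forall>u \<in> e. \<forall>v \<in> e. u \<noteq> v \<longrightarrow> \<delta> v e = - \<delta> u e"
    and "\<forall>u \<in> verts G. (\<Sum>e \<in> edges_at G u. \<delta> u e) = 0"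
  shows "\<forall>e \<in> edges G. \<forall>u \<in> e. \<delta> u e = 0"
  using assms
proof (induction "card (verts G)" arbitrary: G rule: less_induct)
  \<comment> \<open>The flow vanishes on the edge at a leaf by the condition there; then remove the leaf.\<close>
  case less
  note tree = less.prems(1) and anti = less.prems(2) and div = less.prems(3)
  show ?case
  proof (cases "edges G = {}")
    case False
    then obtain u e where u: "u \<in> verts G" and leaf: "edges_at G u = {e}"
      using tree_has_leaf[OF tree] by blast
    have e: "e \<in> edges G" "u \<in> e" using leaf by (auto simp: edges_at_def)
    then obtain w where w: "e = {u, w}" "w \<noteq> u"
      by (rule tree_edge_other_end[OF tree])
    have "\<delta> u e = 0" using div[rule_format, OF u] leaf by simp
    moreover have "\<delta> w e = - \<delta> u e" using anti[rule_format, OF e(1), of u w] w by simp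
    ultimately have \<delta>e: "\<delta> x e = 0" if "x \<in> e" for x using that w by auto
    let ?G = "G\<lparr>verts := verts G - {u}, edges := edges G - {e}\<rparr>"
    have "\<forall>e' \<in> edges ?G. \<forall>x \<in> e'. \<delta> x e' = 0"
    proof (rule less.hyps)
      show "card (verts ?G) < card (verts G)"
        using tree u by (simp add: is_tree_def card_Diff1_less)
      show "is_tree ?G" by (rule is_tree_remove_leaf[OF tree u leaf])
      show "\<forall>e' \<in> edges ?G. \<forall>x \<in> e'. \<forall>y \<in> e'. x \<noteq> y \<longrightarrow> \<delta> y e' = - \<delta> x e'"
      proof -
        have "edges ?G \<subseteq> edges G" by simp
        then show ?thesis using anti by blast
      qed
      show "\<forall>x \<in> verts ?G. (\<Sum>e' \<in> edges_at ?G x. \<delta> x e') = 0"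
      proof
        fix x assume "x \<in> verts ?G"
        have "edges_at ?G x = edges_at G x - {e}" by (auto simp: edges_at_def)
        moreover have "finite (edges_at G x)"
          using finite_edges[OF tree] by (simp add: edges_at_def)
        ultimately have "(\<Sum>e' \<in> edges_at ?G x. \<delta> x e') = (\<Sum>e' \<in> edges_at G x. \<delta> x e')"
          using \<delta>e by (cases "e \<in> edges_at G x") (auto simp: sum_diff1 edges_at_def)
        then show "(\<Sum>e' \<in> edges_at ?G x. \<delta> x e') = 0" using div \<open>x \<in> verts ?G\<close> by simp
      qed
    qed
    then show ?thesis using \<delta>e by auto
  qed simp
qed

section \<open>Affine dimension\<close>

context vector_space
begin

lemma inj_on_independent_image_if_family_independent:
  assumes "finite L" and indep: "\<And>c. (\<Sum>l \<in> L. scale (c l) (v l)) = 0 \<Longrightarrow> \<forall>l \<in> L. c l = 0"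
  shows "inj_on v L \<and> independent (v ` L)"
proof
  show inj: "inj_on v L"
  proof (rule inj_onI, rule ccontr)
    fix i j assume ij: "i \<in> L" "j \<in> L" "v i = v j" "i \<noteq> j"
    let ?c = "\<lambda>l. if l = i then 1 else if l = j then -1 else 0"
    have "(\<Sum>l \<in> L. scale (?c l) (v l)) = (\<Sum>l \<in> {i, j}. scale (?c l) (v l))"
      by (rule sum.mono_neutral_right) (use assms(1) ij in auto)
    also have "\<dots> = 0" using ij by simp
    finally show False using indep[of ?c] ij(1) by auto
  qed
  show "independent (v ` L)"
  proof
    assume "dependent (v ` L)"
    then obtain u where u: "\<exists>w \<in> v ` L. u w \<noteq> 0" "(\<Sum>w \<in> v ` L. scale (u w) w) = 0"
      unfolding dependent_finite[OF finite_imageI[OF assms(1)]] by blast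
    then have "(\<Sum>l \<in> L. scale (u (v l)) (v l)) = 0" by (simp add: sum.reindex[OF inj])
    then show False using indep[of "u \<circ> v"] u(1) by auto
  qed
qed

end

definition scale_fun :: "real \<Rightarrow> (nat \<Rightarrow> real) \<Rightarrow> nat \<Rightarrow> real" where
  "scale_fun c f = (\<lambda>t. c * f t)"

interpretation fun_space: vector_space scale_fun
  by unfold_locales (auto simp: scale_fun_def fun_eq_iff algebra_simps)

lemma sum_fun_apply: "(\<Sum>i \<in> I. f i) t = (\<Sum>i \<in> I. f i t :: real)"
  by (induction I rule: infinite_finite_induct) auto

lemma not_aff_dim_ge_if_affine_span:
  fixes b :: "'i \<Rightarrow> nat \<Rightarrow> real"
  assumes "finite I" and "card I < k"
    and in_span: "\<forall>x \<in> S. \<exists>c. \<forall>t. x t = a t + (\<Sum>i \<in> I. c i * b i t)"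
  shows "\<not> aff_dim_ge S k"
proof
  assume "aff_dim_ge S k"
  then obtain x :: "nat \<Rightarrow> nat \<Rightarrow> real" where xS: "\<forall>i \<le> k. x i \<in> S"
    and indep: "\<forall>c. (\<forall>t. (\<Sum>i \<in> {1..k}. c i * (x i t - x 0 t)) = 0) \<longrightarrow> (\<forall>i \<in> {1..k}. c i = 0)"
    unfolding aff_dim_ge_def by blast
  define v where "v i = x i - x 0" for i
  have "\<forall>i \<in> {..k}. \<exists>c. \<forall>t. x i t = a t + (\<Sum>j \<in> I. c j * b j t)"
    using xS in_span by simp
  then obtain c where c: "\<And>i t. i \<le> k \<Longrightarrow> x i t = a t + (\<Sum>j \<in> I. c i j * b j t)"
    by (metis atMost_iff bchoice)
  have "v i \<in> fun_space.span (b ` I)" if "i \<le> k" for i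
  proof -
    have "v i = (\<Sum>j \<in> I. scale_fun (c i j - c 0 j) (b j))"
      using c[OF that] c[of 0]
      by (simp add: fun_eq_iff v_def sum_fun_apply scale_fun_def left_diff_distrib sum_subtractf)
    also have "\<dots> \<in> fun_space.span (b ` I)"
      by (intro fun_space.span_sum fun_space.span_scale fun_space.span_base) auto
    finally show ?thesis .
  qed
  then have span: "v ` {1..k} \<subseteq> fun_space.span (b ` I)" by auto
  have "inj_on v {1..k} \<and> fun_space.independent (v ` {1..k})"
  proof (rule fun_space.inj_on_independent_image_if_family_independent)
    fix d assume "(\<Sum>l \<in> {1..k}. scale_fun (d l) (v l)) = 0"
    then have "\<forall>t. (\<Sum>l \<in> {1..k}. d l * (x l t - x 0 t)) = 0"
      by (simp add: fun_eq_iff sum_fun_apply scale_fun_def v_def)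
    then show "\<forall>l \<in> {1..k}. d l = 0" using indep by blast
  qed simp
  then have "card (v ` {1..k}) \<le> card (b ` I)"
    using fun_space.independent_span_bound[OF finite_imageI[OF assms(1)] _ span] by blast
  then have "k \<le> card (b ` I)"
    using \<open>inj_on v {1..k} \<and> _\<close> card_image by fastforce
  also have "\<dots> \<le> card I" by (rule card_image_le[OF assms(1)])
  finally show False using assms(2) by simp
qed

section \<open>Curves of a fixed combinatorial type\<close>

definition type_bij ::
    "nat \<Rightarrow> nat \<Rightarrow> (nat \<Rightarrow> int \<times> int) \<Rightarrow> curve \<Rightarrow> curve \<Rightarrow> (nat \<Rightarrow> nat) \<Rightarrow> bool" where
  "type_bij m n Delta C D \<phi> \<longleftrightarrow> is_curve m n Delta D \<and> bij_betw \<phi> (verts C) (verts D) \<and>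
     bij_betw (\<lambda>e. \<phi> ` e) (edges C) (edges D) \<and> (\<forall>l \<in> labs m n. att D l = \<phi> (att C l))"

lemma type_bij_if_same_type:
  "is_curve m n Delta D \<Longrightarrow> same_type m n C D \<Longrightarrow> \<exists>\<phi>. type_bij m n Delta C D \<phi>"
  unfolding same_type_def type_bij_def by blast

lemma other_insert: "u \<noteq> v \<Longrightarrow> other u {u, v} = v"
  unfolding other_def by (rule the_equality) auto

lemma dir_swap: "u \<noteq> v \<Longrightarrow> dir C v {u, v} = - dir C u {u, v}"
  using other_insert[of u v] other_insert[of v u]
  by (simp add: dir_def insert_commute scaleR_diff_right)

lemma type_bij_edges_at:
  assumes C: "is_curve m n Delta C" and \<phi>: "type_bij m n Delta C D \<phi>" and u: "u \<in> verts C"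
  shows "edges_at D (\<phi> u) = (\<lambda>e. \<phi> ` e) ` edges_at C u"
proof -
  have inj: "inj_on \<phi> (verts C)" and edges: "edges D = (\<lambda>e. \<phi> ` e) ` edges C"
    using \<phi> by (auto simp: type_bij_def bij_betw_def)
  have "\<forall>e \<in> edges C. e \<subseteq> verts C" using C by (simp add: is_curve_def is_tree_def)
  then have "\<phi> u \<in> \<phi> ` e \<longleftrightarrow> u \<in> e" if "e \<in> edges C" for e
    using inj u that by (auto dest: inj_onD)
  then show ?thesis by (auto simp: edges_at_def edges)
qed

lemma type_bij_dir:
  assumes C: "is_curve m n Delta C" and \<phi>: "type_bij m n Delta C D \<phi>"
    and "e \<in> edges C" "u \<in> e"
  shows "dir D (\<phi> u) (\<phi> ` e) = dir C u e"
proof -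
  have D: "is_curve m n Delta D" and inj: "inj_on \<phi> (verts C)"
    and inj_edges: "inj_on (\<lambda>e. \<phi> ` e) (edges C)"
    and att: "\<forall>l \<in> labs m n. att D l = \<phi> (att C l)"
    using \<phi> by (auto simp: type_bij_def bij_betw_def)
  have tree: "is_tree C" using C by (simp add: is_curve_def)
  \<comment> \<open>Both curves are balanced with the same ends, so the difference of their directions
    is an antisymmetric flow without sources on the tree.\<close>
  define \<delta> where "\<delta> u e = dir D (\<phi> u) (\<phi> ` e) - dir C u e" for u e
  have "\<forall>e \<in> edges C. \<forall>u \<in> e. \<delta> u e = 0"
  proof (rule tree_flow_vanishes[OF tree])
    show "\<forall>e \<in> edges C. \<forall>u \<in> e. \<forall>v \<in> e. u \<noteq> v \<longrightarrow> \<delta> v e = - \<delta> u e"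
    proof (intro ballI impI)
      fix e u v assume uv: "e \<in> edges C" "u \<in> e" "v \<in> e" "u \<noteq> v"
      obtain w where w: "e = {u, w}" "w \<noteq> u" "w \<in> verts C"
        by (rule tree_edge_other_end[OF tree uv(1,2)])
      have "u \<in> verts C" using tree uv(1,2) by (auto simp: is_tree_def)
      then have "\<phi> u \<noteq> \<phi> w" using inj w(2,3) by (auto dest: inj_onD)
      moreover have "v = w" using uv w by auto
      ultimately show "\<delta> v e = - \<delta> u e"
        using dir_swap[of u w C] dir_swap[of "\<phi> u" "\<phi> w" D] w(1,2) by (simp add: \<delta>_def)
    qed
    show "\<forall>u \<in> verts C. (\<Sum>e \<in> edges_at C u. \<delta> u e) = 0"
    proof
      fix u assume u: "u \<in> verts C"
      let ?ends = "\<lambda>G v. (\<Sum>j \<in> {j. j < n \<and> att G (Y j) = v}. rvec (Delta j))"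
      have "\<phi> u \<in> verts D" using \<phi> u by (auto simp: type_bij_def bij_betw_def)
      have "?ends D (\<phi> u) = ?ends C u"
      proof (intro sum.cong Collect_cong conj_cong refl)
        fix j assume "j < n"
        then have "Y j \<in> labs m n" by (simp add: labs_def)
        then show "att D (Y j) = \<phi> u \<longleftrightarrow> att C (Y j) = u"
          using att C u inj by (auto simp: is_curve_def dest: inj_onD)
      qed
      moreover have "(\<Sum>e \<in> edges_at D (\<phi> u). dir D (\<phi> u) e) = (\<Sum>e \<in> edges_at C u. dir D (\<phi> u) (\<phi> ` e))"
        unfolding type_bij_edges_at[OF C \<phi> u]
        by (rule sum.reindex_cong[OF inj_on_subset[OF inj_edges]]) (auto simp: edges_at_def)
      moreover have "(\<Sum>e \<in> edges_at D (\<phi> u). dir D (\<phi> u) e) = - ?ends D (\<phi> u)"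
        "(\<Sum>e \<in> edges_at C u. dir C u e) = - ?ends C u"
        using C D u \<open>\<phi> u \<in> verts D\<close> by (simp_all add: is_curve_def eq_neg_iff_add_eq_0)
      ultimately show "(\<Sum>e \<in> edges_at C u. \<delta> u e) = 0"
        by (simp add: \<delta>_def sum_subtractf)
    qed
  qed
  then show ?thesis using assms(3,4) by (simp add: \<delta>_def)
qed

lemma type_bij_pos_edge:
  assumes C: "is_curve m n Delta C" and \<phi>: "type_bij m n Delta C D \<phi>"
    and e: "{u, w} \<in> edges C" and "u \<noteq> w"
  shows "pos D (\<phi> w) = pos D (\<phi> u) + len D (\<phi> ` {u, w}) *\<^sub>R dir C u {u, w}"
proof -
  have "\<phi> ` {u, w} \<in> edges D" using \<phi> e unfolding type_bij_def bij_betw_def by (metis imageI)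
  then have "len D (\<phi> ` {u, w}) > 0" using \<phi> by (simp add: type_bij_def is_curve_def)
  have "u \<in> verts C" "w \<in> verts C" using C e by (auto simp: is_curve_def is_tree_def)
  then have "\<phi> u \<noteq> \<phi> w" using \<phi> \<open>u \<noteq> w\<close> by (auto simp: type_bij_def bij_betw_def dest: inj_onD)
  have "dir C u {u, w} = dir D (\<phi> u) (\<phi> ` {u, w})"
    using type_bij_dir[OF C \<phi> e] by simp
  also have "\<dots> = (1 / len D (\<phi> ` {u, w})) *\<^sub>R (pos D (\<phi> w) - pos D (\<phi> u))"
    using other_insert[OF \<open>\<phi> u \<noteq> \<phi> w\<close>] by (simp add: dir_def)
  finally have "len D (\<phi> ` {u, w}) *\<^sub>R dir C u {u, w} = pos D (\<phi> w) - pos D (\<phi> u)"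
    using \<open>len D (\<phi> ` {u, w}) > 0\<close> by simp
  then show ?thesis by (simp add: algebra_simps)
qed

lemma pos_affine_in_edge_lengths:
  assumes C: "is_curve m n Delta C" and \<rho>: "\<rho> \<in> verts C"
  obtains w :: "nat \<Rightarrow> nat set \<Rightarrow> real \<times> real" where
    "\<And>v D \<phi>. v \<in> verts C \<Longrightarrow> type_bij m n Delta C D \<phi> \<Longrightarrow>
       pos D (\<phi> v) = pos D (\<phi> \<rho>) + (\<Sum>e \<in> edges C. len D (\<phi> ` e) *\<^sub>R w v e)"
proof -
  have tree: "is_tree C" using C by (simp add: is_curve_def)
  have "\<exists>w. \<forall>D \<phi>. type_bij m n Delta C D \<phi> \<longrightarrow>
      pos D (\<phi> v) = pos D (\<phi> \<rho>) + (\<Sum>e \<in> edges C. len D (\<phi> ` e) *\<^sub>R w e)"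
    if "(\<rho>, v) \<in> (adj C)\<^sup>*" for v
    using that
  proof (induction rule: rtrancl_induct)
    case base
    show ?case by (rule exI[of _ "\<lambda>_. 0"]) simp
  next
    case (step y z)
    then obtain w where w: "\<forall>D \<phi>. type_bij m n Delta C D \<phi> \<longrightarrow>
        pos D (\<phi> y) = pos D (\<phi> \<rho>) + (\<Sum>e \<in> edges C. len D (\<phi> ` e) *\<^sub>R w e)" by blast
    have e: "{y, z} \<in> edges C" using step(2) by (simp add: adj_def)
    then have "card {y, z} = 2" using tree by (simp add: is_tree_def)
    then have "y \<noteq> z" by (cases "y = z") auto
    let ?w = "\<lambda>e. w e + (if e = {y, z} then dir C y {y, z} else 0)"
    show ?case
    proof (intro exI allI impI)
      fix D \<phi> assume \<phi>: "type_bij m n Delta C D \<phi>"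
      have "(\<Sum>e \<in> edges C. len D (\<phi> ` e) *\<^sub>R ?w e) =
          (\<Sum>e \<in> edges C. len D (\<phi> ` e) *\<^sub>R w e) + len D (\<phi> ` {y, z}) *\<^sub>R dir C y {y, z}"
        using e finite_edges[OF tree]
        by (simp add: scaleR_add_right sum.distrib if_distrib[of "scaleR _"] cong: if_cong)
      then show "pos D (\<phi> z) = pos D (\<phi> \<rho>) + (\<Sum>e \<in> edges C. len D (\<phi> ` e) *\<^sub>R ?w e)"
        using type_bij_pos_edge[OF C \<phi> e \<open>y \<noteq> z\<close>] w \<phi> by (simp add: add.assoc)
    qed
  qed
  then have "\<forall>v \<in> verts C. \<exists>w. \<forall>D \<phi>. type_bij m n Delta C D \<phi> \<longrightarrow>
      pos D (\<phi> v) = pos D (\<phi> \<rho>) + (\<Sum>e \<in> edges C. len D (\<phi> ` e) *\<^sub>R w e)"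
    using tree \<rho> by (simp add: is_tree_def)
  from bchoice[OF this] show thesis using that by blast
qed

definition ev_label :: "nat \<Rightarrow> nat \<Rightarrow> lab" where
  "ev_label m k = (if k < 2 * m then X (k div 2) else Y (k - 2 * m))"

definition ev_coord ::
    "nat \<Rightarrow> (nat \<Rightarrow> int \<times> int) \<Rightarrow> nat set \<Rightarrow> nat \<Rightarrow> real \<times> real \<Rightarrow> real" where
  "ev_coord m Delta F k z =
     (if k < 2 * m then (if even k then fst z else snd z)
      else if k - 2 * m \<in> F then det2 (rvec (Delta (k - 2 * m))) z
      else 0)"

lemma evF_eq_ev_coord: "evF m Delta F C k = ev_coord m Delta F k (pos C (att C (ev_label m k)))"
  by (simp add: evF_def ev_coord_def ev_label_def)

lemma linear_ev_coord: "linear (ev_coord m Delta F k)"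
  by (rule linearI) (auto simp: ev_coord_def det2_def algebra_simps)

lemma ev_coord_eq_0: "\<not> (k < 2 * m \<or> k - 2 * m \<in> F) \<Longrightarrow> ev_coord m Delta F k z = 0"
  by (simp add: ev_coord_def)

lemma ev_label_in_labs: "F \<subseteq> {..<n} \<Longrightarrow> k < 2 * m \<or> k - 2 * m \<in> F \<Longrightarrow> ev_label m k \<in> labs m n"
  by (auto simp: ev_label_def labs_def)

lemma linear_apply_translate_sum:
  fixes l :: "real \<times> real \<Rightarrow> real"
  assumes "linear l"
  shows "l (p + (\<Sum>e \<in> E. c e *\<^sub>R w e)) = fst p * l (1, 0) + snd p * l (0, 1) + (\<Sum>e \<in> E. c e * l (w e))"
proof -
  have "l p = l (fst p *\<^sub>R (1, 0) + snd p *\<^sub>R (0, 1))" by simp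
  then have "l p = fst p * l (1, 0) + snd p * l (0, 1)"
    by (simp only: linear_add[OF assms] linear_scale[OF assms] real_scaleR_def)
  moreover have "l (\<Sum>e \<in> E. c e *\<^sub>R w e) = (\<Sum>e \<in> E. c e * l (w e))"
    by (simp add: linear_sum[OF assms] linear_scale[OF assms])
  ultimately show ?thesis by (simp add: linear_add[OF assms])
qed

lemma not_aff_dim_ge_if_few_edges:
  assumes C: "is_curve m n Delta C" and F: "F \<subseteq> {..<n}"
    and few: "card (edges C) + 2 < 2 * m + card F"
  shows "\<not> aff_dim_ge (evF m Delta F ` {D. is_curve m n Delta D \<and> same_type m n C D}) (2 * m + card F)"
proof -
  have tree: "is_tree C" using C by (simp add: is_curve_def)
  then obtain \<rho> where \<rho>: "\<rho> \<in> verts C" by (auto simp: is_tree_def)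
  obtain w where w: "\<And>v D \<phi>. v \<in> verts C \<Longrightarrow> type_bij m n Delta C D \<phi> \<Longrightarrow>
      pos D (\<phi> v) = pos D (\<phi> \<rho>) + (\<Sum>e \<in> edges C. len D (\<phi> ` e) *\<^sub>R w v e)"
    using pos_affine_in_edge_lengths[OF C \<rho>] by blast
  let ?l = "ev_coord m Delta F" and ?v = "\<lambda>k. att C (ev_label m k)"
  define I :: "(bool + nat set) set" where "I = {Inl False, Inl True} \<union> Inr ` edges C"
  define b where "b i k = (case i of Inl False \<Rightarrow> ?l k (1, 0) | Inl True \<Rightarrow> ?l k (0, 1)
      | Inr e \<Rightarrow> ?l k (w (?v k) e))" for i k
  have fin: "finite (edges C)" by (rule finite_edges[OF tree])
  have "card (Inr ` edges C :: (bool + nat set) set) = card (edges C)"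
    by (rule card_image) (simp add: inj_on_def)
  then have "card I = card (edges C) + 2"
    unfolding I_def using fin by (auto simp: card_insert_if)
  show ?thesis
  proof (rule not_aff_dim_ge_if_affine_span[where a = "\<lambda>_. 0" and b = b])
    show "finite I" using fin by (simp add: I_def)
    show "card I < 2 * m + card F" using \<open>card I = _\<close> few by simp
    show "\<forall>x \<in> evF m Delta F ` {D. is_curve m n Delta D \<and> same_type m n C D}.
        \<exists>c. \<forall>k. x k = 0 + (\<Sum>i \<in> I. c i * b i k)"
    proof
      fix x assume "x \<in> evF m Delta F ` {D. is_curve m n Delta D \<and> same_type m n C D}"
      then obtain D \<phi> where \<phi>: "type_bij m n Delta C D \<phi>" and x: "x = evF m Delta F D"
        using type_bij_if_same_type by blast
      define p where "p = pos D (\<phi> \<rho>)"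
      define c where "c i = (case i of Inl False \<Rightarrow> fst p | Inl True \<Rightarrow> snd p
          | Inr e \<Rightarrow> len D (\<phi> ` e))" for i
      have "x k = 0 + (\<Sum>i \<in> I. c i * b i k)" for k
      proof -
        have sum: "(\<Sum>i \<in> I. c i * b i k) = fst p * ?l k (1, 0) + snd p * ?l k (0, 1)
            + (\<Sum>e \<in> edges C. len D (\<phi> ` e) * ?l k (w (?v k) e))"
          unfolding I_def using fin
          by (subst sum.union_disjoint) (auto simp: sum.reindex c_def b_def)
        show ?thesis
        proof (cases "k < 2 * m \<or> k - 2 * m \<in> F")
          case True
          then have "ev_label m k \<in> labs m n" by (rule ev_label_in_labs[OF F])
          then have "att D (ev_label m k) = \<phi> (?v k)" "?v k \<in> verts C"
            using \<phi> C by (auto simp: type_bij_def is_curve_def)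
          then have "x k = ?l k (p + (\<Sum>e \<in> edges C. len D (\<phi> ` e) *\<^sub>R w (?v k) e))"
            using w[OF _ \<phi>] x by (simp add: evF_eq_ev_coord p_def)
          then show ?thesis using sum linear_apply_translate_sum[OF linear_ev_coord] by simp
        next
          case False
          then show ?thesis using sum x by (simp add: evF_eq_ev_coord ev_coord_eq_0)
        qed
      qed
      then show "\<exists>c. \<forall>k. x k = 0 + (\<Sum>i \<in> I. c i * b i k)" by blast
    qed
  qed
qed

lemma not_aff_dim_ge_if_markings_share_vertex:
  assumes F: "F \<subseteq> {..<n}" and ij: "i < m" "j < m" "i \<noteq> j"
    and shared: "att C (X i) = att C (X j)"
  shows "\<not> aff_dim_ge (evF m Delta F ` {D. is_curve m n Delta D \<and> same_type m n C D}) (2 * m + card F)"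
proof -
  define W where "W = {..<2 * m} \<union> (\<lambda>f. 2 * m + f) ` F"
  define J where "J = W - {2 * j, 2 * j + 1}"
  \<comment> \<open>The coordinates of marking \<open>j\<close> equal those of marking \<open>i\<close>; \<open>\<pi>\<close> redirects the former
    to the latter, leaving the other coordinates alone.\<close>
  define \<pi> where "\<pi> k = (if k = 2 * j then 2 * i else if k = 2 * j + 1 then 2 * i + 1 else k)" for k
  have "finite F" using F finite_subset by blast
  moreover have "card ((\<lambda>f. 2 * m + f) ` F) = card F" by (rule card_image) (simp add: inj_on_def)
  moreover have "{..<2 * m} \<inter> (\<lambda>f. 2 * m + f) ` F = {}" by auto
  ultimately have "finite W" "card W = 2 * m + card F"
    unfolding W_def by (simp_all add: card_Un_disjoint)
  moreover have "{2 * j, 2 * j + 1} \<subseteq> W" using ij by (auto simp: W_def)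
  ultimately have "finite J" "card J + 2 = 2 * m + card F"
    unfolding J_def using ij by (auto simp: card_Diff_subset)
  have \<pi>_J: "\<pi> k \<in> J \<longleftrightarrow> k \<in> W" for k
    using ij by (auto simp: \<pi>_def J_def W_def)
  show ?thesis
  proof (rule not_aff_dim_ge_if_affine_span[where a = "\<lambda>_. 0" and b = "\<lambda>t k. if t = \<pi> k then 1 else 0"])
    show "finite J" "card J < 2 * m + card F" by fact+ (use \<open>card J + 2 = _\<close> in simp)
    show "\<forall>x \<in> evF m Delta F ` {D. is_curve m n Delta D \<and> same_type m n C D}.
        \<exists>c. \<forall>k. x k = 0 + (\<Sum>t \<in> J. c t * (if t = \<pi> k then 1 else 0))"
    proof
      fix x assume "x \<in> evF m Delta F ` {D. is_curve m n Delta D \<and> same_type m n C D}"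
      then obtain D \<phi> where \<phi>: "type_bij m n Delta C D \<phi>" and x: "x = evF m Delta F D"
        using type_bij_if_same_type by blast
      have "att D (X i) = att D (X j)" using \<phi> shared ij by (simp add: type_bij_def labs_def)
      then have x_\<pi>: "x (\<pi> k) = x k" for k using ij by (simp add: x \<pi>_def evF_def)
      have x_0: "x k = 0" if "k \<notin> W" for k
      proof -
        have "\<not> k < 2 * m" using that by (simp add: W_def)
        moreover have "k - 2 * m \<notin> F"
        proof
          assume "k - 2 * m \<in> F"
          then have "2 * m + (k - 2 * m) \<in> W" by (simp add: W_def)
          then show False using that \<open>\<not> k < 2 * m\<close> by simp
        qed
        ultimately show ?thesis by (simp add: x evF_def)
      qed
      have sum: "(\<Sum>t \<in> J. x t * (if t = \<pi> k then 1 else 0)) = (if \<pi> k \<in> J then x (\<pi> k) else 0)" for k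
      proof -
        have "(\<Sum>t \<in> J. x t * (if t = \<pi> k then 1 else 0)) = (\<Sum>t \<in> J. if t = \<pi> k then x t else 0)"
          by (rule sum.cong) auto
        then show ?thesis using \<open>finite J\<close> by simp
      qed
      have "x k = 0 + (\<Sum>t \<in> J. x t * (if t = \<pi> k then 1 else 0))" for k
        using sum[of k] x_\<pi>[of k] x_0[of k] \<pi>_J[of k] by (cases "k \<in> W") simp_all
      then show "\<exists>c. \<forall>k. x k = 0 + (\<Sum>t \<in> J. c t * (if t = \<pi> k then 1 else 0))" by blast
    qed
  qed
qed

section \<open>General position\<close>

lemma card_labs: "card (labs m n) = m + n"
proof -
  have "card (X ` {..<m}) = m" "card (Y ` {..<n}) = n"
    by (simp_all add: card_image inj_on_def)
  then show ?thesis unfolding labs_def by (subst card_Un_disjoint) auto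
qed

lemma sum_valence:
  assumes C: "is_curve m n Delta C"
  shows "(\<Sum>u \<in> verts C. valence m n C u) = 2 * card (edges C) + (m + n)"
proof -
  have tree: "is_tree C" using C by (simp add: is_curve_def)
  have "(\<Sum>u \<in> verts C. card {l \<in> labs m n. att C l = u}) = 1 * card (labs m n)"
  proof (rule sum_multicount)
    show "finite (verts C)" using tree by (simp add: is_tree_def)
    show "finite (labs m n)" by (simp add: labs_def)
    show "\<forall>l \<in> labs m n. card {u \<in> verts C. att C l = u} = 1"
    proof
      fix l assume "l \<in> labs m n"
      then have "{u \<in> verts C. att C l = u} = {att C l}" using C by (auto simp: is_curve_def)
      then show "card {u \<in> verts C. att C l = u} = 1" by simp
    qed
  qed
  then show ?thesis
    by (simp add: valence_def sum.distrib sum_card_edges_at[OF tree] card_labs)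
qed

lemma few_edges_if_unmarked_vertex_not_trivalent:
  assumes "refined_desc r s n Delta C" and inj: "inj_on (\<lambda>i. att C (X i)) {..<r + s}"
    and u0: "u0 \<in> verts C - marked_vertices (r + s) C" "valence (r + s) n C u0 \<noteq> 3"
    and n: "r + 2 * s + card F + 1 = n"
  shows "card (edges C) + 2 < 2 * (r + s) + card F"
proof -
  let ?val = "valence (r + s) n C" and ?M = "marked_vertices (r + s) C"
  have C: "is_curve (r + s) n Delta C"
    and val_marked: "\<forall>i < r + s. ?val (att C (X i)) = (if i < r then 3 else 4)"
    using assms(1) by (auto simp: refined_desc_def)
  have fin: "finite (verts C)" and V: "card (edges C) + 1 = card (verts C)"
    using C by (simp_all add: is_curve_def is_tree_def)
  have M: "?M \<subseteq> verts C" "card ?M = r + s"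
    using C card_image[OF inj] by (auto simp: marked_vertices_def is_curve_def labs_def)
  have "(\<Sum>u \<in> ?M. ?val u) = (\<Sum>i < r + s. if i < r then 3 else 4)"
    unfolding marked_vertices_def using val_marked by (simp add: sum.reindex[OF inj])
  also have "\<dots> = 3 * r + 4 * s"
    by (simp add: lessThan_atLeast0 sum.atLeastLessThan_concat[of 0 r "r + s", symmetric])
  finally have sum_M: "(\<Sum>u \<in> ?M. ?val u) = 3 * r + 4 * s" .
  have val_ge_3: "\<forall>u \<in> verts C. 3 \<le> ?val u" using C by (simp add: is_curve_def)
  then have "3 < ?val u0" using u0 by force
  then have "(\<Sum>u \<in> verts C - ?M. 3) < (\<Sum>u \<in> verts C - ?M. ?val u)"
    using u0(1) val_ge_3 fin by (intro sum_strict_mono_ex1) auto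
  then have "3 * card (verts C - ?M) < (\<Sum>u \<in> verts C - ?M. ?val u)" by simp
  moreover have "card (verts C - ?M) + (r + s) = card (verts C)"
    using M fin card_mono[OF fin M(1)] by (simp add: card_Diff_subset finite_subset)
  moreover have "(\<Sum>u \<in> verts C. ?val u) = (\<Sum>u \<in> verts C - ?M. ?val u) + (\<Sum>u \<in> ?M. ?val u)"
    by (rule sum.subset_diff[OF M(1) fin])
  ultimately show ?thesis using sum_valence[OF C] sum_M V n unfolding distrib_left by linarith
qed

lemma degenerates_refl: "is_curve m n Delta C \<Longrightarrow> degenerates m n C C"
  unfolding degenerates_def is_curve_def is_tree_def
  by (rule exI[of _ id]) (auto simp: card_2_iff)

lemma evF_eq_cond_vec_if_through:
  assumes "through m n Delta F P q C"
  shows "evF m Delta F C = cond_vec m Delta F P q"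
proof
  fix k
  have "det2 (rvec (Delta j)) (q j + t *\<^sub>R rvec (Delta j)) = det2 (rvec (Delta j)) (q j)" for j t
    by (simp add: det2_def algebra_simps)
  then show "evF m Delta F C k = cond_vec m Delta F P q k"
    using assms by (auto simp: evF_def cond_vec_def through_def)
qed

lemma trop_desc_if_refined_desc_through:
  assumes F: "F \<subseteq> {..<n}" and n: "r + 2 * s + card F + 1 = n"
    and gp: "general_position r s n Delta F P q"
    and C: "refined_desc r s n Delta C" and through: "through (r + s) n Delta F P q C"
  shows "trop_desc r s n Delta C"
proof (rule ccontr)
  assume "\<not> trop_desc r s n Delta C"
  then obtain u0 where u0: "u0 \<in> verts C - marked_vertices (r + s) C" "valence (r + s) n C u0 \<noteq> 3"
    using C by (auto simp: trop_desc_def)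
  have curve: "is_curve (r + s) n Delta C" using C by (simp add: refined_desc_def)
  have "\<not> aff_dim_ge (evF (r + s) Delta F ` {D. is_curve (r + s) n Delta D \<and> same_type (r + s) n C D})
      (2 * (r + s) + card F)"
  proof (cases "inj_on (\<lambda>i. att C (X i)) {..<r + s}")
    case True
    show ?thesis
      by (rule not_aff_dim_ge_if_few_edges[OF curve F
            few_edges_if_unmarked_vertex_not_trivalent[OF C True u0 n]])
  next
    case False
    then obtain i j where "i < r + s" "j < r + s" "i \<noteq> j" "att C (X i) = att C (X j)"
      unfolding inj_on_def by auto
    then show ?thesis by (rule not_aff_dim_ge_if_markings_share_vertex[OF F])
  qed
  moreover have "\<exists>D. refined_desc r s n Delta D \<and> degenerates (r + s) n D C"
    using C degenerates_refl[OF curve] by blast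
  ultimately show False
    using gp curve evF_eq_cond_vec_if_through[OF through] unfolding general_position_def by blast
qed

lemma iso_refl: "iso m n C C"
  unfolding iso_def by (rule exI[of _ id]) simp

lemma some_mem_iso_class:
  assumes "K \<in> S // {(C, D). C \<in> S \<and> D \<in> S \<and> iso m n C D}"
  shows "(SOME C. C \<in> K) \<in> S"
proof -
  obtain C where "C \<in> S" "K = {(C, D). C \<in> S \<and> D \<in> S \<and> iso m n C D} `` {C}"
    using assms unfolding quotient_def by blast
  then have "C \<in> K" "K \<subseteq> S" by (auto simp: iso_refl)
  then show ?thesis by (meson someI subsetD)
qed

lemma tendsto_sum_classes:
  assumes "\<And>C. C \<in> S \<Longrightarrow> ((\<lambda>y. f C y) \<longlongrightarrow> g C) F"
  shows "((\<lambda>y. sum_classes m n S (\<lambda>C. f C y)) \<longlongrightarrow> sum_classes m n S g) F"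
  unfolding sum_classes_def by (intro tendsto_sum assms some_mem_iso_class)

lemma sum_classes_mult_left: "sum_classes m n S (\<lambda>C. c * f C) = c * sum_classes m n S f"
  by (simp add: sum_classes_def sum_distrib_left)

theorem lemma3p25:
  fixes r s n :: nat and Delta :: "nat \<Rightarrow> int \<times> int" and F :: "nat set"
    and P q :: "nat \<Rightarrow> real \<times> real"
  assumes "\<forall>j < n. Delta j \<noteq> (0, 0)"
    and "F \<subseteq> {..<n}"
    and "r + 2 * s + card F + 1 = n"
    and "general_position r s n Delta F P q"
  shows "Ndesc_at1 r s n Delta F P q =
           (\<Prod>i \<in> {i \<in> F. odd (weight Delta i)}. real (weight Delta i)) /
           (\<Prod>i \<in> {i. i < n \<and> i \<notin> F \<and> odd (weight Delta i)}. real (weight Delta i)) *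
           Ipow (alpha Delta F) * Ntrop r s n Delta F P q (alpha Delta F)"
proof -
  let ?S = "{C. trop_desc r s n Delta C \<and> through (r + s) n Delta F P q C}"
  let ?E = "\<Prod>j<n. end_limit Delta F j" and ?G = "real (Gcard n Delta F)"
  have S: "{C. refined_desc r s n Delta C \<and> through (r + s) n Delta F P q C} = ?S"
    using trop_desc_if_refined_desc_through[OF assms(2-4)] by (auto simp: trop_desc_def)
  have "finite (verts C)" if "C \<in> ?S" for C
    using that by (simp add: trop_desc_def refined_desc_def is_curve_def is_tree_def)
  then have "(Ndesc r s n Delta F P q \<longlongrightarrow>
      1 / ?G * sum_classes (r + s) n ?S (\<lambda>C. ?E * desc_mult (r + s) n Delta C)) (at 1)"
    unfolding Ndesc_def[abs_def] S using assms(1)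
    by (intro tendsto_mult tendsto_const tendsto_sum_classes curve_mult_tendsto) auto
  then have "Ndesc_at1 r s n Delta F P q = ?E * (1 / ?G * sum_classes (r + s) n ?S (desc_mult (r + s) n Delta))"
    unfolding Ndesc_at1_def sum_classes_mult_left by (simp add: tendsto_Lim)
  also have "\<dots> = ?E * Ipow (alpha Delta F) * Ntrop r s n Delta F P q (alpha Delta F)"
    using Ipow_alpha_pos[OF assms(1,2)] by (simp add: Ntrop_def)
  finally show ?thesis by (simp only: prod_end_limit[OF assms(2)])
qed

end
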